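(* Let $\mathbb{K}$ be an algebraically closed field of characteristic $0$ and let $f\in\mathbb{K}[X,Y]$ be a polynomial of degree $d\ge1$. Then $$\dim_{\mathbb{K}}\ker\mathcal{R}_d(f)=\dim_{\mathbb{K}}\ker\mathcal{G}_d(f)-1,$$ and for every integer $\nu>d$, $$\dim_{\mathbb{K}}\ker\mathcal{R}_\nu(f)=\dim_{\mathbb{K}}\ker\mathcal{G}_{\nu-1}(f).$$
   Context: $\mathbb{K}[X,Y]_{\le n}$ denotes polynomials of total degree $\le n$. For a positive integer $\nu\ge d$: $\mathcal{G}_\nu(f):\mathbb{K}[X,Y]_{\le\nu-1}^2\to\mathbb{K}[X,Y]_{\le\nu+d-2}$, $(G,H)\mapsto f\partial_YG-G\partial_Yf-f\partial_XH+H\partial_Xf$. Let $E_\nu=\{(G,H)\in\mathbb{K}[X,Y]_{\le\nu-1}^2:\ \deg(XG+YH)\le\nu-1\}$ (dimension $\nu^2-1$), and $\mathcal{R}_\nu(f):E_\nu\to\mathbb{K}[X,Y]_{\le\nu+d-3}$ the map $(G,H)\mapsto f\partial_YG-G\partial_Yf-f\partial_XH+H\partial_Xf$ (its image has degree $\le\nu+d-3$). *)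

theory Defs
  imports "HOL-Computational_Algebra.Polynomial" "HOL-Library.Product_Plus"
begin

text \<open>Bivariate polynomials K[X,Y] are represented as 'a poly poly = (K[X])[Y]:
  the outer variable is Y, coefficients are polynomials in X.\<close>

definition polyX :: "'a::field poly poly" where "polyX = [:[:0, 1:]:]"
definition polyY :: "'a::field poly poly" where "polyY = [:0, 1:]"

definition tdeg_le :: "'a::zero poly poly \<Rightarrow> nat \<Rightarrow> bool" where
  "tdeg_le p n \<longleftrightarrow> (\<forall>i. coeff p i \<noteq> 0 \<longrightarrow> i + degree (coeff p i) \<le> n)"

definition total_degree :: "'a::zero poly poly \<Rightarrow> nat" where
  "total_degree p = (if p = 0 then 0 else Max {i + degree (coeff p i) | i. coeff p i \<noteq> 0})"

definition dX :: "'a::field poly poly \<Rightarrow> 'a poly poly" where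
  "dX p = map_poly pderiv p"

definition dY :: "'a::field poly poly \<Rightarrow> 'a poly poly" where
  "dY p = pderiv p"

definition opGR :: "'a::field poly poly \<Rightarrow> 'a poly poly \<Rightarrow> 'a poly poly \<Rightarrow> 'a poly poly" where
  "opGR f G H = f * dY G - G * dY f - f * dX H + H * dX f"

definition kerG :: "'a::field poly poly \<Rightarrow> nat \<Rightarrow> ('a poly poly \<times> 'a poly poly) set" where
  "kerG f \<nu> = {(G, H). tdeg_le G (\<nu> - 1) \<and> tdeg_le H (\<nu> - 1) \<and> opGR f G H = 0}"

definition kerR :: "'a::field poly poly \<Rightarrow> nat \<Rightarrow> ('a poly poly \<times> 'a poly poly) set" where
  "kerR f \<nu> = {(G, H). tdeg_le G (\<nu> - 1) \<and> tdeg_le H (\<nu> - 1)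
       \<and> tdeg_le (polyX * G + polyY * H) (\<nu> - 1) \<and> opGR f G H = 0}"

definition scale2 :: "'a::field \<Rightarrow> 'a poly poly \<times> 'a poly poly \<Rightarrow> 'a poly poly \<times> 'a poly poly" where
  "scale2 c x = (smult [:c:] (fst x), smult [:c:] (snd x))"

definition kdim :: "('a::field poly poly \<times> 'a poly poly) set \<Rightarrow> nat" where
  "kdim S = Vector_Spaces.vector_space.dim scale2 S"

end

theory Submission imports Defs begin

text \<open>
  Everything is read off the top homogeneous components. Let \<open>F\<close> be the degree-\<open>d\<close> form of \<open>f\<close>.
  For \<open>\<nu> > d\<close>, an element \<open>(G, H)\<close> of \<open>ker \<R>\<^sub>\<nu>(f)\<close> has top components \<open>g, h\<close> of degree
  \<open>\<nu> - 1\<close> with \<open>X g + Y h = 0\<close>, so \<open>g = Y S\<close>, \<open>h = -X S\<close>; by Euler's identity the top component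
  of the operator is then \<open>(\<nu> - d) F S\<close>, which forces \<open>S = 0\<close>: the two kernels coincide.
  For \<open>\<nu> = d\<close>, the degree-\<open>d\<close> form \<open>E = X g + Y h\<close> of a kernel element satisfies, again by Euler,
  \<open>F \<partial>\<^sub>Y E = E \<partial>\<^sub>Y F\<close>, hence \<open>E = c F\<close>; subtracting \<open>c/d\<close> times the kernel element
  \<open>(\<partial>\<^sub>X f, \<partial>\<^sub>Y f)\<close>, whose form is \<open>d F \<noteq> 0\<close>, lands in \<open>ker \<R>\<^sub>d(f)\<close>.
\<close>

definition coeff2 :: "'a::zero poly poly \<Rightarrow> nat \<Rightarrow> nat \<Rightarrow> 'a" where
  "coeff2 p i j = coeff (coeff p j) i"

lemma coeff2_eqI: "(\<And>i j. coeff2 p i j = coeff2 q i j) \<Longrightarrow> p = q"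
  unfolding coeff2_def by (rule poly_eqI, rule poly_eqI) simp

lemma coeff2_0 [simp]: "coeff2 0 i j = 0"
  by (simp add: coeff2_def)
lemma coeff2_add [simp]: "coeff2 (p + q) i j = coeff2 p i j + coeff2 q i j"
  by (simp add: coeff2_def)
lemma coeff2_diff [simp]: "coeff2 (p - q) i j = coeff2 p i j - coeff2 (q::'a::ab_group_add poly poly) i j"
  by (simp add: coeff2_def)
lemma coeff2_minus [simp]: "coeff2 (- p) i j = - coeff2 (p::'a::ab_group_add poly poly) i j"
  by (simp add: coeff2_def)
lemma coeff2_smult [simp]: "coeff2 (smult [:c:] p) i j = c * coeff2 (p::'a::comm_semiring_1 poly poly) i j"
  by (simp add: coeff2_def)
lemma coeff2_of_nat_mult [simp]:
  "coeff2 (of_nat k * p) i j = of_nat k * coeff2 (p::'a::comm_ring_1 poly poly) i j"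
  by (simp add: coeff2_def of_nat_poly)
lemma coeff2_sum: "coeff2 (sum g A) i j = (\<Sum>x\<in>A. coeff2 (g x) i j)"
  by (simp add: coeff2_def coeff_sum)
lemma coeff2_polyX_mult [simp]:
  "coeff2 (polyX * p) i j = (if i = 0 then 0 else coeff2 (p::'a::field poly poly) (i - 1) j)"
  by (simp add: coeff2_def polyX_def coeff_pCons split: nat.split)
lemma coeff2_polyY_mult [simp]:
  "coeff2 (polyY * p) i j = (if j = 0 then 0 else coeff2 (p::'a::field poly poly) i (j - 1))"
  by (simp add: coeff2_def polyY_def coeff_pCons split: nat.split)
lemma coeff2_dX [simp]: "coeff2 (dX p) i j = of_nat (Suc i) * coeff2 p (Suc i) j"
  by (simp add: coeff2_def dX_def coeff_map_poly coeff_pderiv)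
lemma coeff2_dY [simp]: "coeff2 (dY p) i j = of_nat (Suc j) * coeff2 p i (Suc j)"
  by (simp add: coeff2_def dY_def coeff_pderiv of_nat_poly)

lemma coeff_mult_nonzero:
  "coeff (a * b) n \<noteq> 0 \<Longrightarrow> \<exists>k\<le>n. coeff a k \<noteq> 0 \<and> coeff b (n - k) \<noteq> 0"
  unfolding coeff_mult by (metis (no_types, lifting) atMost_iff mult_zero_left mult_zero_right sum.neutral)

lemma coeff2_mult_nonzero:
  assumes "coeff2 (p * q) i j \<noteq> 0"
  obtains i1 j1 i2 j2 where "i = i1 + i2" "j = j1 + j2" "coeff2 p i1 j1 \<noteq> 0" "coeff2 q i2 j2 \<noteq> 0"
proof -
  have "coeff (coeff (p * q) j) i \<noteq> 0"
    using assms by (simp add: coeff2_def)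
  then have "(\<Sum>k\<le>j. coeff (coeff p k * coeff q (j - k)) i) \<noteq> 0"
    by (simp add: coeff_mult coeff_sum)
  then obtain k where k: "k \<le> j" "coeff (coeff p k * coeff q (j - k)) i \<noteq> 0"
    by (auto elim: sum.not_neutral_contains_not_neutral)
  then obtain l where "l \<le> i" "coeff (coeff p k) l \<noteq> 0" "coeff (coeff q (j - k)) (i - l) \<noteq> 0"
    using coeff_mult_nonzero by blast
  with k that[of l "i - l" k "j - k"] show ?thesis
    by (simp add: coeff2_def)
qed

lemma tdeg_le_iff: "tdeg_le p n \<longleftrightarrow> (\<forall>i j. coeff2 p i j \<noteq> 0 \<longrightarrow> i + j \<le> n)"
  unfolding tdeg_le_def coeff2_def
proof safe
  fix i j
  assume deg: "\<forall>i. coeff p i \<noteq> 0 \<longrightarrow> i + degree (coeff p i) \<le> n" and "coeff (coeff p j) i \<noteq> 0"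
  moreover from this have "coeff p j \<noteq> 0" "i \<le> degree (coeff p j)"
    by (auto intro: le_degree)
  ultimately show "i + j \<le> n"
    by fastforce
next
  fix i
  assume "\<forall>i' j. coeff (coeff p j) i' \<noteq> 0 \<longrightarrow> i' + j \<le> n" and "coeff p i \<noteq> 0"
  then show "i + degree (coeff p i) \<le> n"
    by (metis add.commute leading_coeff_0_iff)
qed

definition homogeneous :: "'a::zero poly poly \<Rightarrow> nat \<Rightarrow> bool" where
  "homogeneous p n \<longleftrightarrow> (\<forall>i j. coeff2 p i j \<noteq> 0 \<longrightarrow> i + j = n)"

definition tdeg_less :: "'a::zero poly poly \<Rightarrow> nat \<Rightarrow> bool" where
  "tdeg_less p n \<longleftrightarrow> (\<forall>i j. coeff2 p i j \<noteq> 0 \<longrightarrow> i + j < n)"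

lemma homogeneous_iff: "homogeneous p n \<longleftrightarrow> (\<forall>i j. i + j \<noteq> n \<longrightarrow> coeff2 p i j = 0)"
  unfolding homogeneous_def by blast
lemma tdeg_less_iff: "tdeg_less p n \<longleftrightarrow> (\<forall>i j. n \<le> i + j \<longrightarrow> coeff2 p i j = 0)"
  unfolding tdeg_less_def by (auto simp: not_le[symmetric])
lemma tdeg_le_iff_vanish: "tdeg_le p n \<longleftrightarrow> (\<forall>i j. n < i + j \<longrightarrow> coeff2 p i j = 0)"
  unfolding tdeg_le_iff by (auto simp: not_le[symmetric])

lemma homogeneous_imp_tdeg_le: "homogeneous p n \<Longrightarrow> tdeg_le p n"
  unfolding tdeg_le_iff homogeneous_def by simp
lemma tdeg_less_imp_tdeg_le: "tdeg_less p n \<Longrightarrow> tdeg_le p (n - 1)"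
  unfolding tdeg_less_def tdeg_le_iff by fastforce
lemma tdeg_le_mono: "tdeg_le p n \<Longrightarrow> n \<le> m \<Longrightarrow> tdeg_le p m"
  unfolding tdeg_le_iff by (meson order_trans)

lemma tdeg_le_0 [simp]: "tdeg_le 0 n"
  by (simp add: tdeg_le_iff)

lemma homogeneous_add: "homogeneous p n \<Longrightarrow> homogeneous q n \<Longrightarrow> homogeneous (p + q) n"
  unfolding homogeneous_iff by simp
lemma homogeneous_diff:
  "homogeneous p n \<Longrightarrow> homogeneous q n \<Longrightarrow> homogeneous (p - (q::'a::ab_group_add poly poly)) n"
  unfolding homogeneous_iff by simp
lemma homogeneous_smult:
  "homogeneous p n \<Longrightarrow> homogeneous (smult [:c:] (p::'a::comm_semiring_1 poly poly)) n"
  unfolding homogeneous_iff by simp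
lemma homogeneous_polyX_mult:
  assumes "homogeneous p n" shows "homogeneous (polyX * (p::'a::field poly poly)) (Suc n)"
  unfolding homogeneous_iff
proof (intro allI impI)
  fix i j assume "i + j \<noteq> Suc n"
  then have "i = 0 \<or> (i - 1) + j \<noteq> n" by auto
  then show "coeff2 (polyX * p) i j = 0" using assms unfolding homogeneous_iff by auto
qed
lemma homogeneous_polyY_mult:
  assumes "homogeneous p n" shows "homogeneous (polyY * (p::'a::field poly poly)) (Suc n)"
  unfolding homogeneous_iff
proof (intro allI impI)
  fix i j assume "i + j \<noteq> Suc n"
  then have "j = 0 \<or> i + (j - 1) \<noteq> n" by auto
  then show "coeff2 (polyY * p) i j = 0" using assms unfolding homogeneous_iff by auto
qed

lemma tdeg_le_add: "tdeg_le p n \<Longrightarrow> tdeg_le q n \<Longrightarrow> tdeg_le (p + q) n"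
  unfolding tdeg_le_iff_vanish by simp
lemma tdeg_le_diff:
  "tdeg_le p n \<Longrightarrow> tdeg_le q n \<Longrightarrow> tdeg_le (p - (q::'a::ab_group_add poly poly)) n"
  unfolding tdeg_le_iff_vanish by simp
lemma tdeg_le_smult:
  "tdeg_le p n \<Longrightarrow> tdeg_le (smult [:c:] (p::'a::comm_semiring_1 poly poly)) n"
  unfolding tdeg_le_iff_vanish by simp
lemma tdeg_le_polyX_mult:
  assumes "tdeg_le p n" shows "tdeg_le (polyX * (p::'a::field poly poly)) (Suc n)"
  unfolding tdeg_le_iff_vanish
proof (intro allI impI)
  fix i j assume "Suc n < i + j"
  then have "i = 0 \<or> n < (i - 1) + j" by auto
  then show "coeff2 (polyX * p) i j = 0" using assms unfolding tdeg_le_iff_vanish by auto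
qed
lemma tdeg_le_polyY_mult:
  assumes "tdeg_le p n" shows "tdeg_le (polyY * (p::'a::field poly poly)) (Suc n)"
  unfolding tdeg_le_iff_vanish
proof (intro allI impI)
  fix i j assume "Suc n < i + j"
  then have "j = 0 \<or> n < i + (j - 1)" by auto
  then show "coeff2 (polyY * p) i j = 0" using assms unfolding tdeg_le_iff_vanish by auto
qed
lemma tdeg_le_dX: "tdeg_le p n \<Longrightarrow> tdeg_le (dX p) (n - 1)"
  unfolding tdeg_le_iff_vanish by (simp add: less_diff_conv)
lemma tdeg_le_dY: "tdeg_le p n \<Longrightarrow> tdeg_le (dY p) (n - 1)"
  unfolding tdeg_le_iff_vanish by (simp add: less_diff_conv)
lemma tdeg_le_0_imp_dX_eq_0: "tdeg_le p 0 \<Longrightarrow> dX p = 0"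
  by (rule coeff2_eqI) (auto simp: tdeg_le_iff_vanish simp del: of_nat_Suc)
lemma tdeg_le_0_imp_dY_eq_0: "tdeg_le p 0 \<Longrightarrow> dY p = 0"
  by (rule coeff2_eqI) (auto simp: tdeg_le_iff_vanish simp del: of_nat_Suc)

lemma tdeg_less_add: "tdeg_less p n \<Longrightarrow> tdeg_less q n \<Longrightarrow> tdeg_less (p + q) n"
  unfolding tdeg_less_iff by simp

lemma homogeneous_mult:
  assumes "homogeneous p n" "homogeneous q m" shows "homogeneous (p * q) (n + m)"
  unfolding homogeneous_def
proof (intro allI impI)
  fix i j assume "coeff2 (p * q) i j \<noteq> 0"
  then obtain i1 j1 i2 j2
    where "i = i1 + i2" "j = j1 + j2" "coeff2 p i1 j1 \<noteq> 0" "coeff2 q i2 j2 \<noteq> 0"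
    by (rule coeff2_mult_nonzero)
  with assms show "i + j = n + m" unfolding homogeneous_def by fastforce
qed
lemma tdeg_less_mult_left:
  assumes "tdeg_less p n" "tdeg_le q m" shows "tdeg_less (p * q) (n + m)"
  unfolding tdeg_less_def
proof (intro allI impI)
  fix i j assume "coeff2 (p * q) i j \<noteq> 0"
  then obtain i1 j1 i2 j2
    where "i = i1 + i2" "j = j1 + j2" "coeff2 p i1 j1 \<noteq> 0" "coeff2 q i2 j2 \<noteq> 0"
    by (rule coeff2_mult_nonzero)
  with assms show "i + j < n + m" unfolding tdeg_less_def tdeg_le_iff by fastforce
qed
lemma tdeg_less_mult_right:
  assumes "tdeg_le p n" "tdeg_less q m" shows "tdeg_less (p * q) (n + m)"
  using tdeg_less_mult_left[OF assms(2,1)] by (simp add: mult.commute add.commute)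

definition hcomp :: "'a::comm_ring_1 poly poly \<Rightarrow> nat \<Rightarrow> 'a poly poly" where
  "hcomp p n = (\<Sum>j\<le>n. monom (monom (coeff2 p (n - j) j) (n - j)) j)"

lemma coeff2_hcomp [simp]: "coeff2 (hcomp p n) i j = (if i + j = n then coeff2 p i j else 0)"
proof -
  have "coeff (hcomp p n) j = (if j \<le> n then monom (coeff2 p (n - j) j) (n - j) else 0)"
    unfolding hcomp_def coeff_sum by (simp add: coeff_monom)
  then show ?thesis
    unfolding coeff2_def by (auto simp: coeff_monom coeff2_def)
qed

lemma homogeneous_hcomp: "homogeneous (hcomp p n) n"
  by (simp add: homogeneous_def)
lemma tdeg_le_hcomp: "tdeg_le (hcomp p n) n"
  by (simp add: homogeneous_imp_tdeg_le homogeneous_hcomp)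
lemma hcomp_homogeneous: "homogeneous p n \<Longrightarrow> hcomp p n = p"
  by (rule coeff2_eqI) (auto simp: homogeneous_def)
lemma hcomp_tdeg_less: "tdeg_less p n \<Longrightarrow> hcomp p n = 0"
  by (rule coeff2_eqI) (auto simp: tdeg_less_def)
lemma hcomp_above_tdeg: "tdeg_le p n \<Longrightarrow> n < m \<Longrightarrow> hcomp p m = 0"
  unfolding tdeg_le_iff_vanish by (intro coeff2_eqI) simp
lemma tdeg_less_diff_hcomp: "tdeg_le p n \<Longrightarrow> tdeg_less (p - hcomp p n) n"
  unfolding tdeg_less_def tdeg_le_iff by (auto simp: le_less)
lemma tdeg_less_if_hcomp_eq_0: "tdeg_le p n \<Longrightarrow> hcomp p n = 0 \<Longrightarrow> tdeg_less p n"
  using tdeg_less_diff_hcomp by fastforce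

lemma hcomp_0 [simp]: "hcomp 0 n = 0"
  by (rule coeff2_eqI) simp
lemma hcomp_add: "hcomp (p + q) n = hcomp p n + hcomp q n"
  by (rule coeff2_eqI) simp
lemma hcomp_diff: "hcomp (p - q) n = hcomp p n - hcomp q n"
  by (rule coeff2_eqI) simp
lemma hcomp_smult: "hcomp (smult [:c:] p) n = smult [:c:] (hcomp p n)"
  by (rule coeff2_eqI) simp
lemma hcomp_polyX_mult: "hcomp (polyX * p) (Suc n) = polyX * hcomp (p::'a::field poly poly) n"
  by (rule coeff2_eqI) auto
lemma hcomp_polyY_mult: "hcomp (polyY * p) (Suc n) = polyY * hcomp (p::'a::field poly poly) n"
  by (rule coeff2_eqI) auto
lemma hcomp_dX: "tdeg_le p n \<Longrightarrow> hcomp (dX p) (n - 1) = dX (hcomp p n)"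
  by (rule coeff2_eqI, cases n) (auto simp: tdeg_le_iff_vanish simp del: of_nat_Suc)
lemma hcomp_dY: "tdeg_le p n \<Longrightarrow> hcomp (dY p) (n - 1) = dY (hcomp p n)"
  by (rule coeff2_eqI, cases n) (auto simp: tdeg_le_iff_vanish simp del: of_nat_Suc)

lemma hcomp_mult:
  fixes p q :: "'a::comm_ring_1 poly poly"
  assumes "tdeg_le p n" "tdeg_le q m"
  shows "hcomp (p * q) (n + m) = hcomp p n * hcomp q m"
proof -
  define a b where "a = hcomp p n" and "b = hcomp q m"
  define r s where "r = p - a" and "s = q - b"
  have ab: "homogeneous a n" "homogeneous b m"
    by (simp_all add: a_def b_def homogeneous_hcomp)
  have rs: "tdeg_less r n" "tdeg_less s m" "tdeg_le s m"
    using assms by (simp_all add: a_def b_def r_def s_def tdeg_less_diff_hcomp tdeg_le_diff tdeg_le_hcomp)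
  have "tdeg_less (a * s + r * b + r * s) (n + m)"
    using tdeg_less_mult_right[OF homogeneous_imp_tdeg_le[OF ab(1)] rs(2)]
      tdeg_less_mult_left[OF rs(1) homogeneous_imp_tdeg_le[OF ab(2)]]
      tdeg_less_mult_left[OF rs(1,3)]
    by (intro tdeg_less_add)
  moreover have "p * q = a * b + (a * s + r * b + r * s)"
    by (simp add: r_def s_def algebra_simps)
  ultimately have "hcomp (p * q) (n + m) = hcomp (a * b) (n + m)"
    by (simp only: hcomp_add[of "a * b"] hcomp_tdeg_less add_0_right)
  then show ?thesis
    using hcomp_homogeneous[OF homogeneous_mult[OF ab]] by (simp add: a_def b_def)
qed

text \<open>For \<open>b = 0\<close> the degree \<open>a + b - 1\<close> is truncated to \<open>a - 1\<close>; both sides then vanish.\<close>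

lemma hcomp_mult_dX:
  fixes p q :: "'a::field poly poly"
  assumes "tdeg_le p a" "tdeg_le q b"
  shows "hcomp (p * dX q) (a + b - 1) = hcomp p a * dX (hcomp q b)"
proof (cases b)
  case 0
  then show ?thesis
    using assms tdeg_le_hcomp[of q b] by (simp add: tdeg_le_0_imp_dX_eq_0)
next
  case (Suc b')
  then show ?thesis
    using hcomp_mult[OF assms(1) tdeg_le_dX[OF assms(2)]] hcomp_dX[OF assms(2)] by simp
qed

lemma hcomp_mult_dY:
  fixes p q :: "'a::field poly poly"
  assumes "tdeg_le p a" "tdeg_le q b"
  shows "hcomp (p * dY q) (a + b - 1) = hcomp p a * dY (hcomp q b)"
proof (cases b)
  case 0
  then show ?thesis
    using assms tdeg_le_hcomp[of q b] by (simp add: tdeg_le_0_imp_dY_eq_0)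
next
  case (Suc b')
  then show ?thesis
    using hcomp_mult[OF assms(1) tdeg_le_dY[OF assms(2)]] hcomp_dY[OF assms(2)] by simp
qed

lemma hcomp_opGR:
  fixes f G H :: "'a::field poly poly"
  assumes "tdeg_le f d" "tdeg_le G n" "tdeg_le H n"
  shows "hcomp (opGR f G H) (d + n - 1) = opGR (hcomp f d) (hcomp G n) (hcomp H n)"
  using hcomp_mult_dY[OF assms(1,2)] hcomp_mult_dY[OF assms(2,1)]
    hcomp_mult_dX[OF assms(1,3)] hcomp_mult_dX[OF assms(3,1)]
  unfolding opGR_def hcomp_add hcomp_diff by (simp add: add.commute)

lemma polyY_mult_eq_pCons: "polyY * p = pCons 0 p"
  by (simp add: polyY_def)

lemma dX_add: "dX (p + q) = dX p + dX (q::'a::field poly poly)"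
  by (rule coeff2_eqI) (simp add: algebra_simps del: of_nat_Suc)
lemma dX_minus: "dX (- p) = - dX (p::'a::field poly poly)"
  by (rule coeff2_eqI) (simp del: of_nat_Suc)
lemma dX_smult: "dX (smult [:c:] p) = smult [:c:] (dX (p::'a::field poly poly))"
  by (rule coeff2_eqI) (simp add: algebra_simps del: of_nat_Suc)
lemma dX_polyX_mult: "dX (polyX * p) = p + polyX * dX (p::'a::field poly poly)"
proof (rule coeff2_eqI)
  fix i j
  show "coeff2 (dX (polyX * p)) i j = coeff2 (p + polyX * dX p) i j"
    by (cases i) (simp_all add: ring_distribs)
qed
lemma dX_polyY_mult: "dX (polyY * p) = polyY * dX (p::'a::field poly poly)"
  by (rule coeff2_eqI) (simp del: of_nat_Suc)

lemma dY_add: "dY (p + q) = dY p + dY (q::'a::field poly poly)"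
  by (simp add: dY_def pderiv_add)
lemma dY_minus: "dY (- p) = - dY (p::'a::field poly poly)"
  by (simp add: dY_def pderiv_minus)
lemma dY_smult: "dY (smult [:c:] p) = smult [:c:] (dY (p::'a::field poly poly))"
  by (simp add: dY_def pderiv_smult)
lemma dY_polyY_mult: "dY (polyY * p) = p + polyY * dY (p::'a::field poly poly)"
  by (simp add: dY_def polyY_def pderiv_pCons)
lemma dY_polyX_mult: "dY (polyX * p) = polyX * dY (p::'a::field poly poly)"
  by (rule coeff2_eqI) (simp del: of_nat_Suc)

lemma dX_dY_commute: "dX (dY p) = dY (dX (p::'a::field poly poly))"
  by (rule coeff2_eqI) (simp add: algebra_simps del: of_nat_Suc)

lemma euler_homogeneous:
  fixes p :: "'a::field poly poly"
  assumes "homogeneous p n"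
  shows "polyX * dX p + polyY * dY p = of_nat n * p"
proof (rule coeff2_eqI)
  fix i j
  show "coeff2 (polyX * dX p + polyY * dY p) i j = coeff2 (of_nat n * p) i j"
  proof (cases "i + j = n")
    case True
    then show ?thesis
      by (cases i; cases j) (auto simp: ring_distribs)
  next
    case False
    with assms show ?thesis
      by (cases i; cases j) (auto simp: homogeneous_iff simp del: of_nat_Suc)
  qed
qed

lemma homogeneous_syzygy_XY:
  fixes g h :: "'a::field poly poly"
  assumes "homogeneous g (Suc n)" and "polyX * g + polyY * h = 0"
  obtains s where "homogeneous s n" "g = polyY * s" "h = - (polyX * s)"
proof -
  have "coeff2 g i 0 = 0" for i
    using arg_cong[OF assms(2), of "\<lambda>p. coeff2 p (Suc i) 0"] by simp
  then have "coeff g 0 = 0"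
    by (intro poly_eqI) (simp add: coeff2_def)
  then obtain s where g: "g = polyY * s"
    by (metis pCons_cases coeff_pCons_0 polyY_mult_eq_pCons)
  then have "polyY * (polyX * s + h) = 0"
    using assms(2) by (simp add: algebra_simps)
  then have "h = - (polyX * s)"
    by (simp add: polyY_def add_eq_0_iff2)
  moreover have "homogeneous s n"
    unfolding homogeneous_iff
  proof (intro allI impI)
    fix i j assume "i + j \<noteq> n"
    then have "coeff2 g i (Suc j) = 0"
      using assms(1) by (simp add: homogeneous_iff)
    then show "coeff2 s i j = 0"
      by (simp add: g)
  qed
  ultimately show thesis
    using g that by blast
qed

lemma opGR_polyY_polyX:
  fixes F s :: "'a::field poly poly"
  assumes "homogeneous F d" "homogeneous s m"
  shows "opGR F (polyY * s) (- (polyX * s)) + of_nat d * (F * s) = of_nat (m + 2) * (F * s)"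
proof -
  have "opGR F (polyY * s) (- (polyX * s))
      = 2 * F * s + F * (polyX * dX s + polyY * dY s) - s * (polyX * dX F + polyY * dY F)"
    unfolding opGR_def dY_polyY_mult dX_minus dY_minus dX_polyX_mult dX_polyY_mult dY_polyX_mult
    by (simp add: algebra_simps mult_2)
  then show ?thesis
    unfolding euler_homogeneous[OF assms(1)] euler_homogeneous[OF assms(2)]
    by (simp add: algebra_simps)
qed

text \<open>
  The top forms \<open>g = Y s\<close>, \<open>h = -X s\<close> of \<open>G, H\<close> turn the top form of the operator into
  \<open>(n + 2 - d) F s\<close>.
\<close>

lemma kernel_tdeg_drop:
  fixes f G H :: "'a::field_char_0 poly poly"
  assumes f: "tdeg_le f d" "hcomp f d \<noteq> 0" and d: "d \<noteq> n + 2"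
    and GH: "tdeg_le G (Suc n)" "tdeg_le H (Suc n)" "tdeg_le (polyX * G + polyY * H) (Suc n)"
    and ker: "opGR f G H = 0"
  shows "tdeg_le G n \<and> tdeg_le H n"
proof -
  define F g h where "F = hcomp f d" and "g = hcomp G (Suc n)" and "h = hcomp H (Suc n)"
  have "polyX * g + polyY * h = 0"
    using hcomp_above_tdeg[OF GH(3), of "Suc (Suc n)"]
    by (simp add: hcomp_add hcomp_polyX_mult hcomp_polyY_mult g_def h_def)
  then obtain s where s: "homogeneous s n" and gh: "g = polyY * s" "h = - (polyX * s)"
    by (rule homogeneous_syzygy_XY[OF homogeneous_hcomp[of G "Suc n", folded g_def]])
  have "opGR F g h = 0"
    using hcomp_opGR[OF f(1) GH(1,2)] ker by (simp add: F_def g_def h_def)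
  then have "of_nat d * (F * s) = of_nat (n + 2) * (F * s)"
    using opGR_polyY_polyX[OF homogeneous_hcomp[of f d, folded F_def] s] by (simp add: gh)
  moreover have "(of_nat d :: 'a poly poly) \<noteq> of_nat (n + 2)"
    using d by (simp only: of_nat_eq_iff) simp
  ultimately have "F * s = 0"
    by simp
  then have "g = 0" "h = 0"
    using f(2) by (simp_all add: gh F_def)
  then have "tdeg_less G (Suc n)" "tdeg_less H (Suc n)"
    using GH(1,2) by (simp_all add: g_def h_def tdeg_less_if_hcomp_eq_0)
  then show ?thesis
    using tdeg_less_imp_tdeg_le[of G "Suc n"] tdeg_less_imp_tdeg_le[of H "Suc n"] by simp
qed

lemma kerR_eq_kerG_pred:
  fixes f :: "'a::field_char_0 poly poly"
  assumes f: "tdeg_le f d" "hcomp f d \<noteq> 0" and \<nu>: "d < \<nu>" "1 < \<nu>"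
  shows "kerR f \<nu> = kerG f (\<nu> - 1)"
proof -
  define n where "n = \<nu> - 2"
  have n: "\<nu> - 1 = Suc n" "d \<noteq> n + 2"
    using \<nu> by (simp_all add: n_def)
  have "tdeg_le G (Suc n) \<and> tdeg_le H (Suc n) \<and> tdeg_le (polyX * G + polyY * H) (Suc n)
      \<longleftrightarrow> tdeg_le G n \<and> tdeg_le H n" if "opGR f G H = 0" for G H :: "'a poly poly"
  proof
    assume "tdeg_le G (Suc n) \<and> tdeg_le H (Suc n) \<and> tdeg_le (polyX * G + polyY * H) (Suc n)"
    then show "tdeg_le G n \<and> tdeg_le H n"
      using kernel_tdeg_drop[OF f n(2) _ _ _ that] by blast
  next
    assume GH: "tdeg_le G n \<and> tdeg_le H n"
    then have "tdeg_le (polyX * G + polyY * H) (Suc n)"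
      by (intro tdeg_le_add tdeg_le_polyX_mult tdeg_le_polyY_mult) simp_all
    with GH show "tdeg_le G (Suc n) \<and> tdeg_le H (Suc n) \<and> tdeg_le (polyX * G + polyY * H) (Suc n)"
      using tdeg_le_mono[of G n "Suc n"] tdeg_le_mono[of H n "Suc n"] by simp
  qed
  then show ?thesis
    unfolding kerR_def kerG_def n diff_Suc_1 by auto
qed

lemma coeff_mult_pderiv_top:
  fixes p q :: "'a::{idom,ring_char_0} poly"
  shows "coeff (p * pderiv q) (degree p + degree q - 1) = lead_coeff p * (of_nat (degree q) * lead_coeff q)"
proof (cases "degree q")
  case 0
  then have "pderiv q = 0"
    by (simp add: pderiv_eq_0_iff)
  with 0 show ?thesis
    by simp
next
  case (Suc k)
  then have "degree (pderiv q) = k"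
    by (simp add: degree_pderiv)
  with Suc show ?thesis
    using coeff_mult_degree_sum[of p "pderiv q"] by (simp add: coeff_pderiv)
qed

lemma degree_eq_if_pderiv_cross_eq:
  fixes p q :: "'a::{idom,ring_char_0} poly"
  assumes "p \<noteq> 0" "q \<noteq> 0" "p * pderiv q = q * pderiv p"
  shows "degree q = degree p"
proof -
  have "coeff (p * pderiv q) (degree p + degree q - 1) = coeff (q * pderiv p) (degree q + degree p - 1)"
    using assms(3) by (simp add: add.commute)
  then have "lead_coeff p * (of_nat (degree q) * lead_coeff q) = lead_coeff q * (of_nat (degree p) * lead_coeff p)"
    by (simp only: coeff_mult_pderiv_top)
  then have "(lead_coeff p * lead_coeff q) * (of_nat (degree q) - of_nat (degree p)) = 0"
    by (simp add: algebra_simps)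
  then show ?thesis
    using assms(1,2) by simp
qed

lemma coeff_homogeneous: "homogeneous p d \<Longrightarrow> coeff p j = monom (coeff2 p (d - j) j) (d - j)"
  by (rule poly_eqI) (auto simp: coeff_monom homogeneous_iff coeff2_def[symmetric])

lemma homogeneous_proportional_if_pderiv_cross_eq:
  fixes F E :: "'a::field_char_0 poly poly"
  assumes F: "homogeneous F d" "F \<noteq> 0" and E: "homogeneous E d"
    and cross: "F * pderiv E = E * pderiv F"
  obtains c where "E = smult [:c:] F"
proof -
  define a where "a = degree F"
  define c where "c = coeff2 E (d - a) a / coeff2 F (d - a) a"
  define D where "D = E - smult [:c:] F"
  have "coeff F a \<noteq> 0"
    using F(2) by (simp add: a_def)
  then have Fa: "coeff2 F (d - a) a \<noteq> 0"
    using coeff_homogeneous[OF F(1), of a] by auto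
  have "homogeneous D d"
    unfolding D_def by (intro homogeneous_diff E homogeneous_smult F(1))
  then have "coeff D a = 0"
    using coeff_homogeneous[of D d a] Fa by (simp add: D_def c_def)
  have "degree E \<le> a"
    using degree_eq_if_pderiv_cross_eq[OF F(2) _ cross] by (cases "E = 0") (simp_all add: a_def)
  then have "degree D \<le> a"
    unfolding D_def using degree_smult_le[of "[:c:]" F] by (intro degree_diff_le) (simp_all add: a_def)
  moreover have "F * pderiv D = D * pderiv F"
    unfolding D_def pderiv_diff pderiv_smult using cross by (simp add: algebra_simps)
  ultimately have "D = 0"
    using degree_eq_if_pderiv_cross_eq[OF F(2)] \<open>coeff D a = 0\<close>
    by (metis a_def leading_coeff_0_iff)
  then show thesis
    using that by (simp add: D_def)
qed

text \<open>
  The key point for \<open>\<nu> = d\<close>: Euler's identity turns \<open>\<G>\<^sub>d\<close> on top forms into the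
  cross relation \<open>F \<partial>\<^sub>Y E = E \<partial>\<^sub>Y F\<close> for \<open>E = X g + Y h\<close>.
\<close>

lemma kernel_top_form_proportional:
  fixes f G H :: "'a::field_char_0 poly poly"
  assumes f: "tdeg_le f (Suc n)" "hcomp f (Suc n) \<noteq> 0"
    and GH: "tdeg_le G n" "tdeg_le H n" and ker: "opGR f G H = 0"
  obtains c where "hcomp (polyX * G + polyY * H) (Suc n) = smult [:c:] (hcomp f (Suc n))"
proof -
  define F g h where "F = hcomp f (Suc n)" and "g = hcomp G n" and "h = hcomp H n"
  define E where "E = polyX * g + polyY * h"
  have F: "homogeneous F (Suc n)" and h: "homogeneous h n"
    by (simp_all add: F_def h_def homogeneous_hcomp)
  have E: "homogeneous E (Suc n)"
    unfolding E_def g_def h_def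
    by (intro homogeneous_add homogeneous_polyX_mult homogeneous_polyY_mult homogeneous_hcomp)
  have "opGR F g h = 0"
    using hcomp_opGR[OF f(1) GH] ker by (simp add: F_def g_def h_def)
  have "F * dY E - E * dY F = polyX * opGR F g h
      + F * h + F * (polyX * dX h + polyY * dY h) - h * (polyX * dX F + polyY * dY F)"
    unfolding E_def opGR_def dY_add dY_polyX_mult dY_polyY_mult by (simp add: algebra_simps)
  also have "\<dots> = 0"
    unfolding \<open>opGR F g h = 0\<close> euler_homogeneous[OF F] euler_homogeneous[OF h]
    by (simp add: algebra_simps)
  finally have "F * pderiv E = E * pderiv F"
    by (simp add: dY_def)
  with F E f(2) obtain c where "E = smult [:c:] F"
    using homogeneous_proportional_if_pderiv_cross_eq unfolding F_def by blast
  then show thesis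
    using that by (simp add: E_def F_def g_def h_def hcomp_add hcomp_polyX_mult hcomp_polyY_mult)
qed

lemma (in vector_space) dim_insert_if_finite_span:
  assumes "V \<subseteq> span W" "finite W" "x \<notin> span V"
  shows "dim (insert x V) = dim V + 1"
proof -
  obtain B where B: "B \<subseteq> span V" "independent B" "span V \<subseteq> span B" "card B = dim (span V)"
    using basis_exists[of "span V"] by blast
  have "span V \<subseteq> span W"
    using span_mono[OF assms(1)] by (simp add: span_span)
  then have "finite B"
    using independent_span_bound[OF assms(2) B(2)] B(1) by blast
  have "dim (span (insert x V)) = Suc (dim V)"
  proof (rule dim_unique)
    show "insert x B \<subseteq> span (insert x V)"
      by (meson B(1) insertI1 insert_subset order_trans span_base span_mono subset_insertI)
    show "span (insert x V) \<subseteq> span (insert x B)"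
      by (metis B(1,3) span_breakdown_eq span_subspace subsetI subspace_span)
    show "independent (insert x B)"
      by (metis B(1-3) independent_insert span_subspace subspace_span assms(3))
    have "x \<notin> B"
      using B(1) assms(3) span_base by blast
    with \<open>finite B\<close> B(4) show "card (insert x B) = Suc (dim V)"
      by simp
  qed
  then show ?thesis
    by simp
qed

lemma smult_const_add: "smult [:a + b:] p = smult [:a:] p + smult [:b:] (p::'a::comm_semiring_1 poly poly)"
  by (rule coeff2_eqI) (simp add: algebra_simps)
lemma smult_const_mult: "smult [:a:] (smult [:b:] p) = smult [:a * b:] (p::'a::comm_semiring_1 poly poly)"
  by (rule coeff2_eqI) (simp add: algebra_simps)

interpretation pairs: vector_space "scale2 :: 'a::field \<Rightarrow> 'a poly poly \<times> 'a poly poly \<Rightarrow> _"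
  by unfold_locales
    (auto simp: scale2_def smult_add_right smult_const_add smult_const_mult one_pCons[symmetric]
      mult.commute)

lemma opGR_add: "opGR f (G1 + G2) (H1 + H2) = opGR f G1 H1 + opGR f G2 (H2::'a::field poly poly)"
  by (simp add: opGR_def dX_add dY_add algebra_simps)
lemma opGR_smult:
  "opGR f (smult [:c:] G) (smult [:c:] H) = smult [:c:] (opGR f G (H::'a::field poly poly))"
  by (simp add: opGR_def dX_smult dY_smult algebra_simps smult_diff_right smult_add_right)
lemma opGR_0: "opGR f 0 (0::'a::field poly poly) = 0"
  by (simp add: opGR_def dX_def dY_def)

lemma subspace_kerG: "pairs.subspace (kerG (f::'a::field poly poly) n)"
  unfolding pairs.subspace_def kerG_def
  by (auto simp: zero_prod_def scale2_def opGR_add opGR_smult opGR_0 intro: tdeg_le_add tdeg_le_smult)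

lemma kerR_eq_kerG_inter: "kerR f n = kerG f n \<inter> {(G, H). tdeg_le (polyX * G + polyY * H) (n - 1)}"
  unfolding kerR_def kerG_def by auto

lemma subspace_kerR: "pairs.subspace (kerR (f::'a::field poly poly) n)"
proof -
  have XY_add: "polyX * (a + c) + polyY * (b + e) = (polyX * a + polyY * b) + (polyX * c + polyY * e)"
    and XY_smult: "polyX * smult [:k:] a + polyY * smult [:k:] b = smult [:k:] (polyX * a + polyY * b)"
    for a b c e :: "'a poly poly" and k
    by (simp_all add: algebra_simps smult_add_right)
  have "pairs.subspace {(G, H :: 'a poly poly). tdeg_le (polyX * G + polyY * H) (n - 1)}"
    unfolding pairs.subspace_def
    by (auto simp: zero_prod_def scale2_def XY_add XY_smult simp del: mult_smult_right
        intro: tdeg_le_add tdeg_le_smult)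
  then show ?thesis
    unfolding kerR_eq_kerG_inter using subspace_kerG by (rule pairs.subspace_inter[rotated])
qed

definition monomial2 :: "nat \<Rightarrow> nat \<Rightarrow> 'a::comm_semiring_1 poly poly" where
  "monomial2 i j = monom (monom 1 i) j"

lemma coeff2_monomial2 [simp]: "coeff2 (monomial2 a b) i j = (if i = a \<and> j = b then 1 else 0)"
  by (simp add: monomial2_def coeff2_def coeff_monom)

lemma monomial_expansion:
  fixes p :: "'a::field poly poly"
  assumes "tdeg_le p N"
  shows "p = (\<Sum>(i, j)\<in>{..N} \<times> {..N}. smult [:coeff2 p i j:] (monomial2 i j))"
proof (rule coeff2_eqI)
  fix i j
  have "coeff2 (\<Sum>(a, b)\<in>{..N} \<times> {..N}. smult [:coeff2 p a b:] (monomial2 a b)) i j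
      = (\<Sum>x\<in>{..N} \<times> {..N}. if x = (i, j) then coeff2 p i j else 0)"
    unfolding coeff2_sum by (rule sum.cong) (auto split: if_splits)
  also have "\<dots> = coeff2 p i j"
    using assms by (cases "(i, j) \<in> {..N} \<times> {..N}") (auto simp: tdeg_le_iff_vanish)
  finally show "coeff2 p i j = coeff2 (\<Sum>(a, b)\<in>{..N} \<times> {..N}. smult [:coeff2 p a b:] (monomial2 a b)) i j"
    by simp
qed

definition monomial_pairs :: "nat \<Rightarrow> ('a::field poly poly \<times> 'a poly poly) set" where
  "monomial_pairs N = (\<lambda>(i, j). (monomial2 i j, 0)) ` ({..N} \<times> {..N})
    \<union> (\<lambda>(i, j). (0, monomial2 i j)) ` ({..N} \<times> {..N})"

lemma finite_monomial_pairs: "finite (monomial_pairs N)"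
  by (simp add: monomial_pairs_def)

lemma tdeg_le_pair_in_span_monomial_pairs:
  fixes G H :: "'a::field poly poly"
  assumes "tdeg_le G N" "tdeg_le H N"
  shows "(G, H) \<in> pairs.span (monomial_pairs N)"
proof -
  have "(G, 0) = (\<Sum>(i, j)\<in>{..N} \<times> {..N}. scale2 (coeff2 G i j) (monomial2 i j, 0))"
    by (subst monomial_expansion[OF assms(1)]) (simp add: scale2_def sum_prod case_prod_beta)
  also have "\<dots> \<in> pairs.span (monomial_pairs N)"
    by (auto intro!: pairs.span_sum pairs.span_scale[OF pairs.span_base] simp: monomial_pairs_def)
  finally have G: "(G, 0) \<in> pairs.span (monomial_pairs N)" .
  have "(0, H) = (\<Sum>(i, j)\<in>{..N} \<times> {..N}. scale2 (coeff2 H i j) (0, monomial2 i j))"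
    by (subst monomial_expansion[OF assms(2)]) (simp add: scale2_def sum_prod case_prod_beta)
  also have "\<dots> \<in> pairs.span (monomial_pairs N)"
    by (auto intro!: pairs.span_sum pairs.span_scale[OF pairs.span_base] simp: monomial_pairs_def)
  finally have H: "(0, H) \<in> pairs.span (monomial_pairs N)" .
  show ?thesis
    using pairs.span_add[OF G H] by simp
qed

lemma hcomp_euler:
  fixes f :: "'a::field poly poly"
  assumes "tdeg_le f (Suc n)"
  shows "hcomp (polyX * dX f + polyY * dY f) (Suc n) = of_nat (Suc n) * hcomp f (Suc n)"
  using hcomp_dX[OF assms] hcomp_dY[OF assms] euler_homogeneous[OF homogeneous_hcomp[of f "Suc n"]]
  by (simp add: hcomp_add hcomp_polyX_mult hcomp_polyY_mult del: of_nat_Suc)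

lemma gradient_in_kerG:
  fixes f :: "'a::field poly poly"
  assumes "tdeg_le f (Suc n)"
  shows "(dX f, dY f) \<in> kerG f (Suc n)"
  using tdeg_le_dX[OF assms] tdeg_le_dY[OF assms]
  by (simp add: kerG_def opGR_def dX_dY_commute algebra_simps)

lemma gradient_notin_kerR:
  fixes f :: "'a::field_char_0 poly poly"
  assumes "tdeg_le f (Suc n)" "hcomp f (Suc n) \<noteq> 0"
  shows "(dX f, dY f) \<notin> kerR f (Suc n)"
proof
  assume "(dX f, dY f) \<in> kerR f (Suc n)"
  then have "hcomp (polyX * dX f + polyY * dY f) (Suc n) = 0"
    by (intro hcomp_above_tdeg[of _ n]) (simp_all add: kerR_def)
  with assms show False
    by (simp add: hcomp_euler del: of_nat_Suc)
qed

lemma kerG_subset_span_gradient_kerR: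
  fixes f :: "'a::field_char_0 poly poly"
  assumes f: "tdeg_le f (Suc n)" "hcomp f (Suc n) \<noteq> 0"
  shows "kerG f (Suc n) \<subseteq> pairs.span (insert (dX f, dY f) (kerR f (Suc n)))"
proof
  fix x assume x: "x \<in> kerG f (Suc n)"
  then obtain G H where GH: "x = (G, H)" "tdeg_le G n" "tdeg_le H n" "opGR f G H = 0"
    by (auto simp: kerG_def)
  obtain c where c: "hcomp (polyX * G + polyY * H) (Suc n) = smult [:c:] (hcomp f (Suc n))"
    using kernel_top_form_proportional[OF f GH(2-4)] .
  define c' where "c' = c / of_nat (Suc n)"
  define y where "y = x - scale2 c' (dX f, dY f)"
  obtain G' H' where y: "y = (G', H')" "y \<in> kerG f (Suc n)"
    unfolding y_def using pairs.subspace_diff[OF subspace_kerG x pairs.subspace_scale[OF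
        subspace_kerG gradient_in_kerG[OF f(1)]]] by (metis surj_pair)
  have "polyX * G' + polyY * H' = (polyX * G + polyY * H) - smult [:c':] (polyX * dX f + polyY * dY f)"
    using y(1) unfolding y_def GH(1) scale2_def by (auto simp: algebra_simps smult_add_right)
  then have "hcomp (polyX * G' + polyY * H') (Suc n) = 0"
    by (simp add: hcomp_diff hcomp_smult c hcomp_euler[OF f(1)] c'_def of_nat_poly
        smult_const_mult del: of_nat_Suc)
  moreover have "tdeg_le (polyX * G' + polyY * H') (Suc n)"
    using y(2) by (intro tdeg_le_add tdeg_le_polyX_mult tdeg_le_polyY_mult) (simp_all add: y(1) kerG_def)
  ultimately have "tdeg_le (polyX * G' + polyY * H') n"
    using tdeg_less_imp_tdeg_le tdeg_less_if_hcomp_eq_0 by fastforce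
  then have "y \<in> kerR f (Suc n)"
    using y by (simp add: kerR_def kerG_def)
  then have "y + scale2 c' (dX f, dY f) \<in> pairs.span (insert (dX f, dY f) (kerR f (Suc n)))"
    by (intro pairs.span_add pairs.span_scale pairs.span_base) auto
  then show "x \<in> pairs.span (insert (dX f, dY f) (kerR f (Suc n)))"
    by (simp add: y_def)
qed

lemma dim_kerG_eq_Suc_dim_kerR:
  fixes f :: "'a::field_char_0 poly poly"
  assumes f: "tdeg_le f (Suc n)" "hcomp f (Suc n) \<noteq> 0"
  shows "pairs.dim (kerG f (Suc n)) = pairs.dim (kerR f (Suc n)) + 1"
proof -
  let ?w = "(dX f, dY f)"
  have "insert ?w (kerR f (Suc n)) \<subseteq> kerG f (Suc n)"
    using gradient_in_kerG[OF f(1)] by (auto simp: kerR_def kerG_def)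
  then have "pairs.span (insert ?w (kerR f (Suc n))) = kerG f (Suc n)"
    using kerG_subset_span_gradient_kerR[OF f] pairs.span_minimal[OF _ subspace_kerG]
    by (metis pairs.span_subspace subspace_kerG)
  then have "pairs.dim (kerG f (Suc n)) = pairs.dim (insert ?w (kerR f (Suc n)))"
    by (metis pairs.dim_span)
  also have "\<dots> = pairs.dim (kerR f (Suc n)) + 1"
  proof (rule pairs.dim_insert_if_finite_span[OF _ finite_monomial_pairs])
    show "kerR f (Suc n) \<subseteq> pairs.span (monomial_pairs n)"
      by (auto simp: kerR_def intro: tdeg_le_pair_in_span_monomial_pairs)
    show "?w \<notin> pairs.span (kerR f (Suc n))"
      using gradient_notin_kerR[OF f] by (simp add: pairs.span_eq_iff[THEN iffD2, OF subspace_kerR])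
  qed
  finally show ?thesis .
qed

lemma tdeg_le_total_degree_and_top_form_nonzero:
  fixes f :: "'a::comm_ring_1 poly poly"
  assumes "f \<noteq> 0"
  shows "tdeg_le f (total_degree f)" and "hcomp f (total_degree f) \<noteq> 0"
proof -
  define M where "M = {i + degree (coeff f i) | i. coeff f i \<noteq> 0}"
  have td: "total_degree f = Max M"
    using assms by (simp add: total_degree_def M_def)
  have "M \<subseteq> (\<lambda>i. i + degree (coeff f i)) ` {..degree f}"
    unfolding M_def using le_degree by fastforce
  then have fin: "finite M"
    by (rule finite_subset) simp
  have "coeff f (degree f) \<noteq> 0"
    using assms by simp
  then have "M \<noteq> {}"
    unfolding M_def by blast
  with fin have "Max M \<in> M"
    by (rule Max_in)
  then obtain i where i: "coeff f i \<noteq> 0" "i + degree (coeff f i) = total_degree f"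
    unfolding td M_def by auto
  show "tdeg_le f (total_degree f)"
    unfolding tdeg_le_def td using fin by (auto intro: Max_ge simp: M_def)
  have top: "coeff2 (hcomp f (total_degree f)) (degree (coeff f i)) i = coeff2 f (degree (coeff f i)) i"
    using i(2) by (simp add: add.commute)
  show "hcomp f (total_degree f) \<noteq> 0"
  proof
    assume "hcomp f (total_degree f) = 0"
    with top i(1) show False
      by (simp add: coeff2_def)
  qed
qed

theorem proposition1p5:
  fixes f :: "'a::{alg_closed_field, field_char_0} poly poly" and d :: nat
  assumes "f \<noteq> 0" and "total_degree f = d" and "d \<ge> 1"
  shows "int (kdim (kerR f d)) = int (kdim (kerG f d)) - 1
    \<and> (\<forall>\<nu>::nat. \<nu> > d \<longrightarrow> kdim (kerR f \<nu>) = kdim (kerG f (\<nu> - 1)))"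
proof -
  have f: "tdeg_le f d" "hcomp f d \<noteq> 0"
    using tdeg_le_total_degree_and_top_form_nonzero[OF assms(1)] assms(2) by simp_all
  obtain n where d: "d = Suc n"
    using assms(3) by (cases d) simp_all
  have "kdim (kerG f d) = kdim (kerR f d) + 1"
    using dim_kerG_eq_Suc_dim_kerR[OF f[unfolded d]] by (simp add: kdim_def d)
  moreover have "kerR f \<nu> = kerG f (\<nu> - 1)" if "d < \<nu>" for \<nu>
    using kerR_eq_kerG_pred[OF f that] that assms(3) by simp
  ultimately show ?thesis
    by simp
qed

end
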